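(* Let $\mathcal{C}$ be a Fraïssé class of finite structures over a finite relational language, all of whose members are rigid, with Fraïssé limit $M$, and suppose that $\mathcal{C}$ contains exactly one $2$-element structure up to isomorphism. Then either $M$ has a reduct which is a total order, or there exist $A,B\in\mathcal{C}$ with $|A|=2$ and $|B|=3$ such that for every $C\in\mathcal{C}$ there is a $2$-colouring of the embeddings $A\to C$ for which no embedding $B\to C$ is monochromatic (so $\mathcal{C}$ is not a Ramsey class).
   Context: All structures are non-empty, and classes are closed under isomorphism and hereditary. A Fraïssé class is a hereditary class with the joint embedding and amalgamation properties; its Fraïssé limit is the unique countable homogeneous structure with age $\mathcal{C}$. A reduct of $M$ which is a total order means a strict total order on the domain of $M$ definable in $M$ by a first-order formula without parameters. An embedding $g:B\to C$ is monochromatic for a colouring of the embeddings $A\to C$ if all embeddings $A\to C$ with image contained in the image of $g$ get the same colour. $\mathcal{C}$ is a Ramsey class if for all $A,B\in\mathcal{C}$ there is $C\in\mathcal{C}$ such that every $2$-colouring of the embeddings $A\to C$ admits a monochromatic embedding $B\to C$. *)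

theory Defs
  imports "HOL-Library.FuncSet"
begin

text \<open>Elements are natural numbers (every finite or countable
  structure has an isomorphic copy on nat).\<close>

record 'r rstruct =
  dom :: "nat set"
  rel :: "'r \<Rightarrow> nat list \<Rightarrow> bool"

definition is_struct :: "'r set \<Rightarrow> ('r \<Rightarrow> nat) \<Rightarrow> 'r rstruct \<Rightarrow> bool" where
  "is_struct L ar A \<longleftrightarrow> dom A \<noteq> {} \<and>
     (\<forall>R xs. rel A R xs \<longrightarrow> R \<in> L \<and> length xs = ar R \<and> set xs \<subseteq> dom A)"

definition emb :: "'r set \<Rightarrow> 'r rstruct \<Rightarrow> 'r rstruct \<Rightarrow> (nat \<Rightarrow> nat) set" where
  "emb L A B = {f \<in> dom A \<rightarrow>\<^sub>E dom B. inj_on f (dom A) \<and>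
     (\<forall>R\<in>L. \<forall>xs. set xs \<subseteq> dom A \<longrightarrow> (rel A R xs \<longleftrightarrow> rel B R (map f xs)))}"

definition iso :: "'r set \<Rightarrow> 'r rstruct \<Rightarrow> 'r rstruct \<Rightarrow> (nat \<Rightarrow> nat) set" where
  "iso L A B = {f \<in> emb L A B. f ` dom A = dom B}"

definition isomorphic :: "'r set \<Rightarrow> 'r rstruct \<Rightarrow> 'r rstruct \<Rightarrow> bool" where
  "isomorphic L A B \<longleftrightarrow> iso L A B \<noteq> {}"

definition rigid :: "'r set \<Rightarrow> 'r rstruct \<Rightarrow> bool" where
  "rigid L A \<longleftrightarrow> (\<forall>f\<in>iso L A A. \<forall>x\<in>dom A. f x = x)"

definition substr :: "'r rstruct \<Rightarrow> nat set \<Rightarrow> 'r rstruct" where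
  "substr A S = \<lparr>dom = S, rel = (\<lambda>R xs. rel A R xs \<and> set xs \<subseteq> S)\<rparr>"

definition hereditary_class :: "'r set \<Rightarrow> ('r \<Rightarrow> nat) \<Rightarrow> 'r rstruct set \<Rightarrow> bool" where
  "hereditary_class L ar \<C> \<longleftrightarrow>
     (\<forall>A\<in>\<C>. is_struct L ar A \<and> finite (dom A)) \<and>
     (\<forall>A\<in>\<C>. \<forall>B. is_struct L ar B \<and> isomorphic L A B \<longrightarrow> B \<in> \<C>) \<and>
     (\<forall>A\<in>\<C>. \<forall>S. S \<subseteq> dom A \<and> S \<noteq> {} \<longrightarrow> substr A S \<in> \<C>)"

definition JEP :: "'r set \<Rightarrow> 'r rstruct set \<Rightarrow> bool" where
  "JEP L \<C> \<longleftrightarrow> (\<forall>A\<in>\<C>. \<forall>B\<in>\<C>. \<exists>D\<in>\<C>. emb L A D \<noteq> {} \<and> emb L B D \<noteq> {})"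

definition AP :: "'r set \<Rightarrow> 'r rstruct set \<Rightarrow> bool" where
  "AP L \<C> \<longleftrightarrow> (\<forall>A\<in>\<C>. \<forall>B1\<in>\<C>. \<forall>B2\<in>\<C>. \<forall>f1\<in>emb L A B1. \<forall>f2\<in>emb L A B2.
      \<exists>D\<in>\<C>. \<exists>g1\<in>emb L B1 D. \<exists>g2\<in>emb L B2 D. \<forall>x\<in>dom A. g1 (f1 x) = g2 (f2 x))"

definition fraisse_class :: "'r set \<Rightarrow> ('r \<Rightarrow> nat) \<Rightarrow> 'r rstruct set \<Rightarrow> bool" where
  "fraisse_class L ar \<C> \<longleftrightarrow> \<C> \<noteq> {} \<and> hereditary_class L ar \<C> \<and> JEP L \<C> \<and> AP L \<C>"

definition age :: "'r set \<Rightarrow> ('r \<Rightarrow> nat) \<Rightarrow> 'r rstruct \<Rightarrow> 'r rstruct set" where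
  "age L ar M = {A. is_struct L ar A \<and> finite (dom A) \<and> emb L A M \<noteq> {}}"

definition homogeneous :: "'r set \<Rightarrow> 'r rstruct \<Rightarrow> bool" where
  "homogeneous L M \<longleftrightarrow> (\<forall>S T h. S \<subseteq> dom M \<and> T \<subseteq> dom M \<and> finite S \<and> S \<noteq> {} \<and>
      h \<in> iso L (substr M S) (substr M T) \<longrightarrow>
      (\<exists>\<sigma>\<in>iso L M M. \<forall>x\<in>S. \<sigma> x = h x))"

text \<open>Fraisse limit: countable (automatic, elements are nat) homogeneous structure with age C.\<close>
definition fraisse_limit :: "'r set \<Rightarrow> ('r \<Rightarrow> nat) \<Rightarrow> 'r rstruct set \<Rightarrow> 'r rstruct \<Rightarrow> bool" where
  "fraisse_limit L ar \<C> M \<longleftrightarrow> is_struct L ar M \<and> homogeneous L M \<and> age L ar M = \<C>"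

datatype 'r fo =
    FEq nat nat
  | FRel 'r "nat list"
  | FNeg "'r fo"
  | FAnd "'r fo" "'r fo"
  | FEx nat "'r fo"

fun fv :: "'r fo \<Rightarrow> nat set" where
  "fv (FEq i j) = {i, j}"
| "fv (FRel R vs) = set vs"
| "fv (FNeg \<phi>) = fv \<phi>"
| "fv (FAnd \<phi> \<psi>) = fv \<phi> \<union> fv \<psi>"
| "fv (FEx v \<phi>) = fv \<phi> - {v}"

fun syms :: "'r fo \<Rightarrow> 'r set" where
  "syms (FEq i j) = {}"
| "syms (FRel R vs) = {R}"
| "syms (FNeg \<phi>) = syms \<phi>"
| "syms (FAnd \<phi> \<psi>) = syms \<phi> \<union> syms \<psi>"
| "syms (FEx v \<phi>) = syms \<phi>"

fun sat :: "'r rstruct \<Rightarrow> (nat \<Rightarrow> nat) \<Rightarrow> 'r fo \<Rightarrow> bool" where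
  "sat M \<sigma> (FEq i j) = (\<sigma> i = \<sigma> j)"
| "sat M \<sigma> (FRel R vs) = rel M R (map \<sigma> vs)"
| "sat M \<sigma> (FNeg \<phi>) = (\<not> sat M \<sigma> \<phi>)"
| "sat M \<sigma> (FAnd \<phi> \<psi>) = (sat M \<sigma> \<phi> \<and> sat M \<sigma> \<psi>)"
| "sat M \<sigma> (FEx v \<phi>) = (\<exists>a\<in>dom M. sat M (\<sigma>(v := a)) \<phi>)"

text \<open>The binary relation defined in M by a formula with free variables among 0 (for x) and 1 (for y).\<close>
definition defined_rel :: "'r rstruct \<Rightarrow> 'r fo \<Rightarrow> nat \<Rightarrow> nat \<Rightarrow> bool" where
  "defined_rel M \<phi> a b \<longleftrightarrow> sat M ((\<lambda>_. a)(1 := b)) \<phi>"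

definition strict_total_order_on :: "nat set \<Rightarrow> (nat \<Rightarrow> nat \<Rightarrow> bool) \<Rightarrow> bool" where
  "strict_total_order_on X r \<longleftrightarrow>
     (\<forall>x\<in>X. \<not> r x x) \<and>
     (\<forall>x\<in>X. \<forall>y\<in>X. \<forall>z\<in>X. r x y \<and> r y z \<longrightarrow> r x z) \<and>
     (\<forall>x\<in>X. \<forall>y\<in>X. x \<noteq> y \<longrightarrow> r x y \<or> r y x)"

definition has_total_order_reduct :: "'r set \<Rightarrow> 'r rstruct \<Rightarrow> bool" where
  "has_total_order_reduct L M \<longleftrightarrow> (\<exists>\<phi>. fv \<phi> \<subseteq> {0, 1} \<and> syms \<phi> \<subseteq> L \<and>
      strict_total_order_on (dom M) (defined_rel M \<phi>))"

definition monochromatic :: "'r set \<Rightarrow> 'r rstruct \<Rightarrow> 'r rstruct \<Rightarrow> ((nat \<Rightarrow> nat) \<Rightarrow> bool)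
    \<Rightarrow> 'r rstruct \<Rightarrow> (nat \<Rightarrow> nat) \<Rightarrow> bool" where
  "monochromatic L A C \<chi> B g \<longleftrightarrow>
     (\<exists>c. \<forall>f\<in>emb L A C. f ` dom A \<subseteq> g ` dom B \<longrightarrow> \<chi> f = c)"

end

theory Submission
  imports Defs
begin

text \<open>Let \<open>A\<close> be the rigid two-element structure, with domain \<open>{a, b}\<close>. Since swapping \<open>a\<close>
  and \<open>b\<close> is not an automorphism, some atomic formula in two variables holds of \<open>(a, b)\<close> and
  fails of \<open>(b, a)\<close> (or vice versa). Together with \<open>x \<noteq> y\<close> it defines in \<open>M\<close> the relation "\<open>a \<mapsto> x, b \<mapsto> y\<close> extends to
  an embedding of \<open>A\<close>", and as every two-element substructure of \<open>M\<close> is a copy of \<open>A\<close> this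
  relation is a tournament. If the tournament is transitive it is a definable total order.
  Otherwise it contains a cyclic triangle \<open>B\<close>; colour a copy \<open>f\<close> of \<open>A\<close> by whether
  \<open>f a < f b\<close> in the natural numbers. Every copy of \<open>B\<close> contains three copies of \<open>A\<close>
  forming a cycle, and a cycle cannot be increasing or decreasing at all three steps.\<close>

lemma emb_substrI:
  assumes "e \<in> emb L A M" "e ` dom A \<subseteq> S"
  shows "e \<in> emb L A (substr M S)"
proof -
  have "\<forall>R\<in>L. \<forall>xs. set xs \<subseteq> dom A \<longrightarrow>
      (rel A R xs \<longleftrightarrow> rel M R (map e xs) \<and> set (map e xs) \<subseteq> S)"
    using assms unfolding emb_def by (auto simp: subset_iff)
  then show ?thesis
    using assms unfolding emb_def substr_def by (auto simp: PiE_def Pi_def)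
qed

lemma emb_substrD:
  assumes "e \<in> emb L A (substr M S)" "S \<subseteq> dom M"
  shows "e \<in> emb L A M"
proof -
  have image: "e ` dom A \<subseteq> S"
    using assms(1) unfolding emb_def substr_def by (auto simp: PiE_def Pi_def)
  have "rel A R xs \<longleftrightarrow> rel M R (map e xs)" if "R \<in> L" "set xs \<subseteq> dom A" for R xs
    using assms(1) image that unfolding emb_def substr_def by auto
  then show ?thesis
    using assms unfolding emb_def substr_def by (auto simp: PiE_def Pi_def)
qed

lemma emb_comp:
  assumes "e \<in> emb L A B" "g \<in> emb L B C"
  shows "restrict (g \<circ> e) (dom A) \<in> emb L A C"
proof -
  have image: "e ` dom A \<subseteq> dom B"
    using assms(1) unfolding emb_def by (auto simp: PiE_def Pi_def)
  have "rel A R xs \<longleftrightarrow> rel C R (map (restrict (g \<circ> e) (dom A)) xs)"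
    if "R \<in> L" "set xs \<subseteq> dom A" for R xs
  proof -
    have "rel A R xs \<longleftrightarrow> rel B R (map e xs)"
      using assms(1) that unfolding emb_def by blast
    also have "\<dots> \<longleftrightarrow> rel C R (map g (map e xs))"
    proof -
      have "set (map e xs) \<subseteq> dom B"
        using image that(2) by auto
      with assms(2) that(1) show ?thesis
        unfolding emb_def by blast
    qed
    also have "map g (map e xs) = map (restrict (g \<circ> e) (dom A)) xs"
      using that(2) by (auto simp: subset_iff)
    finally show ?thesis .
  qed
  moreover have "inj_on (restrict (g \<circ> e) (dom A)) (dom A)"
    using assms image unfolding emb_def inj_on_def by (auto simp: subset_iff)
  moreover have "restrict (g \<circ> e) (dom A) \<in> dom A \<rightarrow>\<^sub>E dom C"
    using assms image unfolding emb_def by (auto simp: PiE_def Pi_def subset_iff)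
  ultimately show ?thesis
    unfolding emb_def by blast
qed

lemma substr_in_age:
  assumes "is_struct L ar M" "S \<subseteq> dom M" "S \<noteq> {}" "finite S"
  shows "substr M S \<in> age L ar M"
proof -
  have "is_struct L ar (substr M S)"
    using assms(1,3) unfolding is_struct_def substr_def by auto
  moreover have "restrict id S \<in> emb L (substr M S) M"
  proof -
    have "\<And>xs. set xs \<subseteq> S \<Longrightarrow> map (restrict id S) xs = xs"
      by (simp add: map_idI subset_iff)
    then show ?thesis
      using assms(2) unfolding emb_def substr_def by (auto simp: inj_on_def)
  qed
  ultimately show ?thesis
    using assms unfolding age_def substr_def by auto
qed

definition pair_inst :: "nat list \<Rightarrow> nat \<Rightarrow> nat \<Rightarrow> nat \<Rightarrow> nat list" where
  "pair_inst xs a u v = map (\<lambda>z. if z = a then u else v) xs"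

lemma rel_pair_inst_emb:
  assumes "e \<in> emb L A M" "R \<in> L" "u \<in> dom A" "v \<in> dom A"
  shows "rel M R (pair_inst xs a (e u) (e v)) \<longleftrightarrow> rel A R (pair_inst xs a u v)"
proof -
  have "pair_inst xs a (e u) (e v) = map e (pair_inst xs a u v)"
    unfolding pair_inst_def by auto
  moreover have "set (pair_inst xs a u v) \<subseteq> dom A"
    using assms(3,4) unfolding pair_inst_def by auto
  ultimately show ?thesis
    using assms(1,2) unfolding emb_def by auto
qed

lemma rigid_two_point_distinguished:
  assumes "rigid L A" "dom A = {a, b}" "a \<noteq> b"
  obtains R xs where "R \<in> L" "rel A R (pair_inst xs a a b) \<noteq> rel A R (pair_inst xs a b a)"
proof -
  define s where "s = restrict (\<lambda>z. if z = a then b else a) (dom A)"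
  have "\<exists>R\<in>L. \<exists>xs. rel A R (pair_inst xs a a b) \<noteq> rel A R (pair_inst xs a b a)"
  proof (rule ccontr)
    assume swap_invariant: "\<not> ?thesis"
    have "rel A R xs \<longleftrightarrow> rel A R (map s xs)" if "R \<in> L" "set xs \<subseteq> dom A" for R xs
    proof -
      have "pair_inst xs a a b = xs"
        using that(2) assms(2) unfolding pair_inst_def by (intro map_idI) auto
      moreover have "pair_inst xs a b a = map s xs"
        using that(2) assms(2) unfolding pair_inst_def s_def by (auto simp: subset_iff)
      ultimately show ?thesis
        using swap_invariant that(1) by metis
    qed
    moreover have "s \<in> dom A \<rightarrow>\<^sub>E dom A" "inj_on s (dom A)" "s ` dom A = dom A"
      using assms(2) unfolding s_def by (auto simp: inj_on_def)
    ultimately have "s \<in> iso L A A"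
      unfolding iso_def emb_def by blast
    then show False
      using assms unfolding rigid_def s_def by auto
  qed
  then show thesis
    using that by blast
qed

definition emb_arc :: "'r set \<Rightarrow> 'r rstruct \<Rightarrow> nat \<Rightarrow> nat \<Rightarrow> 'r rstruct \<Rightarrow> nat \<Rightarrow> nat \<Rightarrow> bool" where
  "emb_arc L A a b M x y \<longleftrightarrow> (\<exists>e\<in>emb L A M. e a = x \<and> e b = y)"

lemma emb_arc_irrefl:
  assumes "a \<in> dom A" "b \<in> dom A" "a \<noteq> b"
  shows "\<not> emb_arc L A a b M x x"
  using assms unfolding emb_arc_def emb_def inj_on_def by auto

lemma emb_arc_rel:
  assumes "emb_arc L A a b M x y" "a \<in> dom A" "b \<in> dom A" "R \<in> L"
  shows "rel M R (pair_inst xs a x y) \<longleftrightarrow> rel A R (pair_inst xs a a b)"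
    and "rel M R (pair_inst xs a y x) \<longleftrightarrow> rel A R (pair_inst xs a b a)"
proof -
  obtain e where e: "e \<in> emb L A M" "x = e a" "y = e b"
    using assms(1) unfolding emb_arc_def by blast
  show "rel M R (pair_inst xs a x y) \<longleftrightarrow> rel A R (pair_inst xs a a b)"
    and "rel M R (pair_inst xs a y x) \<longleftrightarrow> rel A R (pair_inst xs a b a)"
    unfolding e(2,3) using rel_pair_inst_emb[OF e(1) assms(4)] assms(2,3) by blast+
qed

lemma emb_arc_asym:
  assumes "rigid L A" "dom A = {a, b}" "a \<noteq> b" "emb_arc L A a b M x y"
  shows "\<not> emb_arc L A a b M y x"
proof
  assume "emb_arc L A a b M y x"
  obtain R xs where "R \<in> L" "rel A R (pair_inst xs a a b) \<noteq> rel A R (pair_inst xs a b a)"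
    using rigid_two_point_distinguished assms(1-3) .
  with emb_arc_rel[OF assms(4)] emb_arc_rel[OF \<open>emb_arc L A a b M y x\<close>] assms(2)
  show False by auto
qed

lemma emb_arc_total:
  assumes pairs_iso: "\<forall>x\<in>dom M. \<forall>y\<in>dom M. x \<noteq> y \<longrightarrow> isomorphic L A (substr M {x, y})"
    and "dom A = {a, b}" "x \<in> dom M" "y \<in> dom M" "x \<noteq> y"
  shows "emb_arc L A a b M x y \<or> emb_arc L A a b M y x"
proof -
  obtain h where h: "h \<in> iso L A (substr M {x, y})"
    using pairs_iso assms(3-5) unfolding isomorphic_def by blast
  then have "h \<in> emb L A M"
    using emb_substrD[of h L A M "{x, y}"] assms(3,4) unfolding iso_def by auto
  moreover have "h ` {a, b} = {x, y}"
    using h assms(2) unfolding iso_def substr_def by auto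
  ultimately show ?thesis
    unfolding emb_arc_def by (auto simp: doubleton_eq_iff)
qed

lemma emb_arc_definable:
  assumes "rigid L A" "dom A = {a, b}" "a \<noteq> b"
    and pairs_iso: "\<forall>x\<in>dom M. \<forall>y\<in>dom M. x \<noteq> y \<longrightarrow> isomorphic L A (substr M {x, y})"
  obtains \<phi> where "fv \<phi> \<subseteq> {0, 1}" "syms \<phi> \<subseteq> L"
    "\<And>x y. x \<in> dom M \<Longrightarrow> y \<in> dom M \<Longrightarrow> defined_rel M \<phi> x y \<longleftrightarrow> emb_arc L A a b M x y"
proof -
  obtain R xs where R: "R \<in> L"
    and distinguished: "rel A R (pair_inst xs a a b) \<noteq> rel A R (pair_inst xs a b a)"
    using rigid_two_point_distinguished assms(1-3) .
  define c where "c = rel A R (pair_inst xs a a b)"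
  define atom where "atom = FRel R (map (\<lambda>z. if z = a then 0 else 1) xs)"
  define \<phi> where "\<phi> = FAnd (FNeg (FEq 0 1)) (if c then atom else FNeg atom)"
  have "fv \<phi> \<subseteq> {0, 1}" "syms \<phi> \<subseteq> L"
    using R unfolding \<phi>_def atom_def by auto
  moreover have "defined_rel M \<phi> x y \<longleftrightarrow> emb_arc L A a b M x y"
    if "x \<in> dom M" "y \<in> dom M" for x y
  proof -
    have "map ((\<lambda>_. x)((1::nat) := y)) (map (\<lambda>z. if z = a then 0 else 1) xs) =
        pair_inst xs a x y"
      unfolding pair_inst_def by auto
    then have "defined_rel M \<phi> x y \<longleftrightarrow> x \<noteq> y \<and> rel M R (pair_inst xs a x y) = c"
      unfolding defined_rel_def \<phi>_def atom_def by (auto simp del: map_map)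
    also have "\<dots> \<longleftrightarrow> emb_arc L A a b M x y"
      using emb_arc_total[OF pairs_iso assms(2) that] emb_arc_rel[of L A a b M]
        emb_arc_irrefl[of a A b L M] R distinguished assms(2,3) unfolding c_def by auto
    finally show ?thesis .
  qed
  ultimately show thesis
    using that by blast
qed

lemma has_total_order_reductI:
  assumes "fv \<phi> \<subseteq> {0, 1}" "syms \<phi> \<subseteq> L"
    and "\<And>x y. x \<in> dom M \<Longrightarrow> y \<in> dom M \<Longrightarrow> defined_rel M \<phi> x y \<longleftrightarrow> r x y"
    and "strict_total_order_on (dom M) r"
  shows "has_total_order_reduct L M"
  using assms unfolding has_total_order_reduct_def strict_total_order_on_def by (metis (no_types))

lemma tournament_cyclic_triangle:
  assumes asym: "\<And>x y. x \<in> X \<Longrightarrow> y \<in> X \<Longrightarrow> r x y \<Longrightarrow> \<not> r y x"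
    and total: "\<And>x y. x \<in> X \<Longrightarrow> y \<in> X \<Longrightarrow> x \<noteq> y \<Longrightarrow> r x y \<or> r y x"
    and "\<not> strict_total_order_on X r"
  obtains x y z where "x \<in> X" "y \<in> X" "z \<in> X" "r x y" "r y z" "r z x"
proof -
  obtain x y z where xyz: "x \<in> X" "y \<in> X" "z \<in> X" "r x y" "r y z" "\<not> r x z"
    using assms unfolding strict_total_order_on_def by metis
  then have "r z x"
    using asym total by metis
  with xyz show thesis
    using that by blast
qed

lemma emb_arc_through_substr:
  assumes "dom A = {a, b}" "emb_arc L A a b M u v" "u \<in> S" "v \<in> S" "g \<in> emb L (substr M S) C"
  obtains f where "f \<in> emb L A C" "f ` dom A \<subseteq> g ` S" "f a = g u" "f b = g v"
proof -
  obtain e where e: "e \<in> emb L A M" "e a = u" "e b = v"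
    using assms(2) unfolding emb_arc_def by blast
  have image: "e ` dom A \<subseteq> S"
    using assms(1,3,4) e by auto
  have "restrict (g \<circ> e) (dom A) \<in> emb L A C"
    using emb_comp[OF emb_substrI[OF e(1) image] assms(5)] .
  moreover have "restrict (g \<circ> e) (dom A) ` dom A \<subseteq> g ` S"
    using image by auto
  ultimately show thesis
    using that assms(1) e(2,3) by simp
qed

lemma cyclic_triangle_not_monochromatic:
  assumes "dom A = {a, b}" "a \<noteq> b"
    and "emb_arc L A a b M x y" "emb_arc L A a b M y z" "emb_arc L A a b M z x"
    and g: "g \<in> emb L (substr M {x, y, z}) C"
  shows "\<not> monochromatic L A C (\<lambda>f. f a < f b) (substr M {x, y, z}) g"
proof
  assume "monochromatic L A C (\<lambda>f. f a < f b) (substr M {x, y, z}) g"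
  then obtain col
    where col: "\<And>f. f \<in> emb L A C \<Longrightarrow> f ` dom A \<subseteq> g ` {x, y, z} \<Longrightarrow> (f a < f b) = col"
    unfolding monochromatic_def substr_def by auto
  have arc_colour: "(g u < g v) = col"
    if "u \<in> {x, y, z}" "v \<in> {x, y, z}" "emb_arc L A a b M u v" for u v
    using emb_arc_through_substr[OF assms(1) that(3,1,2) g] col by metis
  have "x \<noteq> y" "y \<noteq> z" "z \<noteq> x"
    using emb_arc_irrefl assms(1-5) by (metis insertCI)+
  moreover have "inj_on g {x, y, z}"
    using g unfolding emb_def substr_def by auto
  ultimately have "g x \<noteq> g y" "g y \<noteq> g z" "g z \<noteq> g x"
    by (auto simp: inj_on_def)
  with arc_colour[of x y] arc_colour[of y z] arc_colour[of z x] assms(3-5) show False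
    by (cases col) auto
qed

theorem corollary1p6:
  fixes L :: "'r set" and ar :: "'r \<Rightarrow> nat"
    and \<C> :: "'r rstruct set" and M :: "'r rstruct"
  assumes "finite L"
    and "fraisse_class L ar \<C>"
    and "\<forall>A\<in>\<C>. rigid L A"
    and "fraisse_limit L ar \<C> M"
    and "\<exists>A\<in>\<C>. card (dom A) = 2 \<and> (\<forall>B\<in>\<C>. card (dom B) = 2 \<longrightarrow> isomorphic L A B)"
  shows "has_total_order_reduct L M \<or>
    (\<exists>A\<in>\<C>. \<exists>B\<in>\<C>. card (dom A) = 2 \<and> card (dom B) = 3 \<and>
       (\<forall>C\<in>\<C>. \<exists>\<chi> :: (nat \<Rightarrow> nat) \<Rightarrow> bool.
          \<forall>g\<in>emb L B C. \<not> monochromatic L A C \<chi> B g))"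
proof -
  obtain A where A: "A \<in> \<C>" "card (dom A) = 2" "rigid L A"
    and unique: "\<forall>B\<in>\<C>. card (dom B) = 2 \<longrightarrow> isomorphic L A B"
    using assms(3,5) by blast
  then obtain a b where ab: "dom A = {a, b}" "a \<noteq> b"
    by (meson card_2_iff)
  have M: "is_struct L ar M" "age L ar M = \<C>"
    using assms(4) unfolding fraisse_limit_def by auto
  have substr_in_C: "substr M S \<in> \<C>" if "S \<subseteq> dom M" "S \<noteq> {}" "finite S" for S
    using substr_in_age[OF M(1) that] M(2) by simp
  have pairs_iso: "\<forall>x\<in>dom M. \<forall>y\<in>dom M. x \<noteq> y \<longrightarrow> isomorphic L A (substr M {x, y})"
    using unique substr_in_C[of "{_, _}"] unfolding substr_def by simp
  show ?thesis
  proof (cases "strict_total_order_on (dom M) (emb_arc L A a b M)")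
    case True
    obtain \<phi> where "fv \<phi> \<subseteq> {0, 1}" "syms \<phi> \<subseteq> L"
      "\<And>x y. x \<in> dom M \<Longrightarrow> y \<in> dom M \<Longrightarrow> defined_rel M \<phi> x y \<longleftrightarrow> emb_arc L A a b M x y"
      using emb_arc_definable[OF A(3) ab pairs_iso] by blast
    with True show ?thesis
      using has_total_order_reductI by blast
  next
    case False
    then obtain x y z where xyz: "x \<in> dom M" "y \<in> dom M" "z \<in> dom M"
      "emb_arc L A a b M x y" "emb_arc L A a b M y z" "emb_arc L A a b M z x"
      using tournament_cyclic_triangle[of "dom M" "emb_arc L A a b M"]
        emb_arc_asym[OF A(3) ab] emb_arc_total[OF pairs_iso ab(1)] by blast
    then have "x \<noteq> y" "y \<noteq> z" "z \<noteq> x"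
      using emb_arc_irrefl ab by (metis insertCI)+
    then have "substr M {x, y, z} \<in> \<C>" "card (dom (substr M {x, y, z})) = 3"
      using substr_in_C xyz(1-3) unfolding substr_def by auto
    then show ?thesis
      using cyclic_triangle_not_monochromatic[OF ab xyz(4-6)] A(1,2) by blast
  qed
qed

end
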